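(* Let $\mathcal{A}$ be a complete topological ring and let $\mathcal{B}$ be a complete topological $\mathcal{A}$-algebra. Then there is a one-to-one correspondence between restricted exponential $\mathcal{A}$-homomorphisms $\mathrm{e}\colon\mathcal{B}\rightarrow\mathcal{B}\{T\}$ and topologically integrable iterated higher $\mathcal{A}$-derivations of $\mathcal{B}$, given by associating to $\mathrm{e}=\sum_{i\in\mathbb{N}}\mathrm{e}_iT^i$ the family $D=\{D^{(i)}\}_{i\ge0}$ with $D^{(i)}=\mathrm{e}_i$ (and conversely $D\mapsto\sum_i D^{(i)}T^i$).
   Context: Conventions: all topological rings and modules are linearly topologized and admit a countable fundamental system of neighbourhoods of $0$ consisting of open ideals (resp. submodules); homomorphisms of topological rings/modules are continuous. A topological ring is complete if the canonical map to $\varprojlim_{\mathfrak{a}}\mathcal{A}/\mathfrak{a}$ (over open ideals, quotients discrete, inverse limit topology) is an isomorphism of topological rings. A complete topological $\mathcal{A}$-algebra is a complete topological ring with a continuous ring homomorphism from $\mathcal{A}$. For a complete topological ring $\mathcal{B}$, $\mathcal{B}\{T\}$ (resp. $\mathcal{B}\{T,T'\}$) is the ring of restricted power series: formal power series whose coefficients converge to $0$ (for every open ideal $\mathfrak{b}$, all but finitely many coefficients lie in $\mathfrak{b}$), topologized by the ideals of series with all coefficients in $\mathfrak{b}$, $\mathfrak{b}$ open. A restricted exponential $\mathcal{A}$-homomorphism is a continuous $\mathcal{A}$-algebra homomorphism $\mathrm{e}\colon\mathcal{B}\to\mathcal{B}\{T\}$, written $\mathrm{e}(b)=\sum_i\mathrm{e}_i(b)T^i$,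 such that $\mathrm{e}_0=\mathrm{id}_{\mathcal{B}}$ and, for every $b\in\mathcal{B}$, $\sum_{(i,j)\in\mathbb{N}^2}\mathrm{e}_j(\mathrm{e}_i(b))T'^jT^i=\sum_{\ell\in\mathbb{N}}\mathrm{e}_\ell(b)(T+T')^\ell$ in $\mathcal{B}\{T,T'\}$. A continuous iterated higher $\mathcal{A}$-derivation of $\mathcal{B}$ is a family $D=\{D^{(i)}\}_{i\ge0}$ of continuous $\mathcal{A}$-module homomorphisms $\mathcal{B}\to\mathcal{B}$ with $D^{(0)}=\mathrm{id}$, $D^{(i)}(bb')=\sum_{j=0}^iD^{(j)}(b)D^{(i-j)}(b')$ and $D^{(i)}\circ D^{(j)}=\binom{i+j}{i}D^{(i+j)}$. It is topologically integrable if $(D^{(i)})_i$ converges continuously to $0$: for every $b\in\mathcal{B}$ and open ideal $\mathfrak{b}'$ there exist an open ideal $\mathfrak{b}$ and $n_0$ with $D^{(n)}(b+\mathfrak{b})\subseteq\mathfrak{b}'$ for all $n\ge n_0$. *)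

theory Defs
  imports "HOL-Computational_Algebra.Formal_Power_Series"
begin

text \<open>Rings are commutative with 1 (type class comm_ring_1). A linear topology with a
countable fundamental system of open ideals is given by a decreasing sequence of ideals I.\<close>

definition ideal_in :: "'a::comm_ring_1 set \<Rightarrow> bool" where
  "ideal_in J \<longleftrightarrow> 0 \<in> J \<and> (\<forall>x\<in>J. \<forall>y\<in>J. x + y \<in> J) \<and> (\<forall>r. \<forall>x\<in>J. r * x \<in> J)"

definition lin_top :: "(nat \<Rightarrow> 'a::comm_ring_1 set) \<Rightarrow> bool" where
  "lin_top I \<longleftrightarrow> (\<forall>n. ideal_in (I n)) \<and> (\<forall>n. I (Suc n) \<subseteq> I n)"

definition open_ideal :: "(nat \<Rightarrow> 'a::comm_ring_1 set) \<Rightarrow> 'a set \<Rightarrow> bool" where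
  "open_ideal I J \<longleftrightarrow> ideal_in J \<and> (\<exists>n. I n \<subseteq> J)"

text \<open>Elements of the inverse limit of the discrete quotients A / I n: compatible systems of cosets.\<close>
definition compatible_system :: "(nat \<Rightarrow> 'a::comm_ring_1 set) \<Rightarrow> (nat \<Rightarrow> 'a set) \<Rightarrow> bool" where
  "compatible_system I X \<longleftrightarrow> (\<forall>n. \<exists>c. X n = (\<lambda>y. c + y) ` I n) \<and> (\<forall>n. X (Suc n) \<subseteq> X n)"

text \<open>Complete: the canonical map to the inverse limit is bijective (it is then automatically a
homeomorphism for the inverse limit topology).\<close>
definition complete_ring :: "(nat \<Rightarrow> 'a::comm_ring_1 set) \<Rightarrow> bool" where
  "complete_ring I \<longleftrightarrow> lin_top I \<and>
     (\<forall>X. compatible_system I X \<longrightarrow> (\<exists>!b. \<forall>n. X n = (\<lambda>y. b + y) ` I n))"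

definition cont_map :: "(nat \<Rightarrow> 'a::comm_ring_1 set) \<Rightarrow> (nat \<Rightarrow> 'c::comm_ring_1 set) \<Rightarrow> ('a \<Rightarrow> 'c) \<Rightarrow> bool" where
  "cont_map IX IY f \<longleftrightarrow> (\<forall>x m. \<exists>n. \<forall>y\<in>IX n. f (x + y) - f x \<in> IY m)"

definition ring_hom_fun :: "('a::comm_ring_1 \<Rightarrow> 'c::comm_ring_1) \<Rightarrow> bool" where
  "ring_hom_fun f \<longleftrightarrow> f 1 = 1 \<and> (\<forall>x y. f (x + y) = f x + f y) \<and> (\<forall>x y. f (x * y) = f x * f y)"

definition restricted_fps :: "(nat \<Rightarrow> 'b::comm_ring_1 set) \<Rightarrow> 'b fps \<Rightarrow> bool" where
  "restricted_fps IB s \<longleftrightarrow> (\<forall>J. open_ideal IB J \<longrightarrow> finite {i. fps_nth s i \<notin> J})"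

definition fps_top :: "(nat \<Rightarrow> 'b::comm_ring_1 set) \<Rightarrow> nat \<Rightarrow> 'b fps set" where
  "fps_top IB m = {s. \<forall>i. fps_nth s i \<in> IB m}"

text \<open>Restricted exponential A-homomorphisms e : B \<rightarrow> B{T}, where the A-algebra structure
of B is given by phi and that of B{T} by constants. The identity in B{T,T'} is stated
coefficientwise (coefficient of T^i T'^j).\<close>
definition restricted_exp_hom :: "(nat \<Rightarrow> 'b::comm_ring_1 set) \<Rightarrow> ('a::comm_ring_1 \<Rightarrow> 'b) \<Rightarrow> ('b \<Rightarrow> 'b fps) \<Rightarrow> bool" where
  "restricted_exp_hom IB \<phi> e \<longleftrightarrow>
     (\<forall>b. restricted_fps IB (e b)) \<and> ring_hom_fun e \<and> (\<forall>a. e (\<phi> a) = fps_const (\<phi> a)) \<and>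
     cont_map IB (fps_top IB) e \<and>
     (\<forall>b. fps_nth (e b) 0 = b) \<and>
     (\<forall>b i j. fps_nth (e (fps_nth (e b) i)) j = of_nat ((i + j) choose i) * fps_nth (e b) (i + j))"

definition iterated_higher_deriv :: "(nat \<Rightarrow> 'b::comm_ring_1 set) \<Rightarrow> ('a::comm_ring_1 \<Rightarrow> 'b) \<Rightarrow> (nat \<Rightarrow> 'b \<Rightarrow> 'b) \<Rightarrow> bool" where
  "iterated_higher_deriv IB \<phi> D \<longleftrightarrow>
     (\<forall>i. (\<forall>x y. D i (x + y) = D i x + D i y) \<and> (\<forall>a x. D i (\<phi> a * x) = \<phi> a * D i x) \<and>
          cont_map IB IB (D i)) \<and>
     D 0 = id \<and>
     (\<forall>i b b'. D i (b * b') = (\<Sum>j\<le>i. D j b * D (i - j) b')) \<and>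
     (\<forall>i j. D i \<circ> D j = (\<lambda>b. of_nat ((i + j) choose i) * D (i + j) b))"

definition topologically_integrable :: "(nat \<Rightarrow> 'b::comm_ring_1 set) \<Rightarrow> (nat \<Rightarrow> 'b \<Rightarrow> 'b) \<Rightarrow> bool" where
  "topologically_integrable IB D \<longleftrightarrow>
     (\<forall>b J'. open_ideal IB J' \<longrightarrow>
        (\<exists>J n0. open_ideal IB J \<and> (\<forall>n\<ge>n0. \<forall>y\<in>J. D n (b + y) \<in> J')))"

end

theory Submission
  imports Defs
begin

text \<open>Both directions are coefficientwise translations: the multiplicativity of \<open>e\<close>
is the Leibniz rule, and the exponential identity is the composition rule
\<open>D\<^sub>i \<circ> D\<^sub>j = ((i + j) choose i) D\<^sub>i\<^sub>+\<^sub>j\<close>. Restrictedness of the series \<open>e b\<close>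
together with continuity of \<open>e\<close>, which is uniform in the coefficient index, gives
topological integrability. Conversely, integrability controls all but finitely many \<open>D\<^sub>i\<close>
at once and the remaining ones are continuous, which yields continuity of \<open>e\<close> into \<open>B{T}\<close>.\<close>

lemma lin_top_antimono: "lin_top I \<Longrightarrow> m \<le> n \<Longrightarrow> I n \<subseteq> I m"
  unfolding lin_top_def by (rule lift_Suc_antimono_le[of I]) auto

lemma eventually_lin_top:
  assumes "lin_top I" and "\<forall>y\<in>I k. P y"
  shows "\<forall>\<^sub>F n in sequentially. \<forall>y\<in>I n. P y"
  using assms lin_top_antimono unfolding eventually_sequentially by blast

lemma open_ideal_lin_top: "lin_top I \<Longrightarrow> open_ideal I (I n)"
  by (auto simp: open_ideal_def lin_top_def)

lemma open_ideal_zero: "open_ideal I J \<Longrightarrow> 0 \<in> J"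
  by (simp add: open_ideal_def ideal_in_def)

lemma open_ideal_add: "open_ideal I J \<Longrightarrow> x \<in> J \<Longrightarrow> y \<in> J \<Longrightarrow> x + y \<in> J"
  by (simp add: open_ideal_def ideal_in_def)

lemma restricted_fps_iff_eventually:
  "restricted_fps I s \<longleftrightarrow> (\<forall>J. open_ideal I J \<longrightarrow> (\<forall>\<^sub>F i in sequentially. fps_nth s i \<in> J))"
  by (simp add: restricted_fps_def eventually_cofinite[symmetric] cofinite_eq_sequentially)

lemma cont_map_fps_top_iff:
  "cont_map I (fps_top I) e \<longleftrightarrow>
     (\<forall>x m. \<exists>n. \<forall>y\<in>I n. \<forall>i. fps_nth (e (x + y)) i - fps_nth (e x) i \<in> I m)"
  by (simp add: cont_map_def fps_top_def)

lemma binomial_add_symmetric: "(i + j) choose i = (j + i) choose j"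
  by (metis add.commute add_diff_cancel_left' binomial_symmetric le_add1)

lemma fps_idempotent_eq_1:
  fixes f :: "'a::ring_1 fps"
  assumes "f * f = f" and "fps_nth f 0 = 1"
  shows "f = 1"
proof -
  have left_inv: "fps_left_inverse f 1 * f = 1"
    using assms(2) by (intro fps_left_inverse) simp
  have "f = fps_left_inverse f 1 * (f * f)"
    by (simp add: mult.assoc[symmetric] left_inv)
  also have "\<dots> = 1"
    by (simp add: assms(1) left_inv)
  finally show ?thesis .
qed

lemma iterated_higher_deriv_coeffs:
  assumes "restricted_exp_hom I \<phi> e"
  shows "iterated_higher_deriv I \<phi> (\<lambda>i b. fps_nth (e b) i)"
proof -
  have hom: "ring_hom_fun e" and const: "\<And>a. e (\<phi> a) = fps_const (\<phi> a)"
    and cont: "cont_map I (fps_top I) e" and coeff0: "\<And>b. fps_nth (e b) 0 = b"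
    and exp: "\<And>b i j. fps_nth (e (fps_nth (e b) i)) j =
                of_nat ((i + j) choose i) * fps_nth (e b) (i + j)"
    using assms unfolding restricted_exp_hom_def by auto
  have add: "e (x + y) = e x + e y" and mult: "e (x * y) = e x * e y" for x y
    using hom unfolding ring_hom_fun_def by auto
  have "cont_map I I (\<lambda>b. fps_nth (e b) i)" for i
    using cont[unfolded cont_map_fps_top_iff] unfolding cont_map_def by blast
  moreover have "fps_nth (e (\<phi> a * x)) i = \<phi> a * fps_nth (e x) i" for a x i
    by (simp add: mult const)
  moreover have "fps_nth (e (fps_nth (e b) j)) i =
      of_nat ((i + j) choose i) * fps_nth (e b) (i + j)" for i j b
    using exp[of b j i] by (simp only: binomial_add_symmetric[of i j] add.commute[of j i])
  ultimately show ?thesis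
    unfolding iterated_higher_deriv_def
    by (auto simp: add mult coeff0 fps_mult_nth atLeast0AtMost)
qed

lemma topologically_integrable_coeffs:
  assumes "lin_top I" and restricted: "\<And>b. restricted_fps I (e b)"
    and cont: "cont_map I (fps_top I) e"
  shows "topologically_integrable I (\<lambda>i b. fps_nth (e b) i)"
  unfolding topologically_integrable_def
proof (intro allI impI)
  fix b J' assume J': "open_ideal I J'"
  then obtain k where k: "I k \<subseteq> J'"
    unfolding open_ideal_def by auto
  obtain n where n: "\<forall>y\<in>I n. \<forall>i. fps_nth (e (b + y)) i - fps_nth (e b) i \<in> I k"
    using cont unfolding cont_map_fps_top_iff by blast
  obtain n0 where n0: "\<forall>i\<ge>n0. fps_nth (e b) i \<in> J'"
    using restricted[of b] J' unfolding restricted_fps_iff_eventually eventually_sequentially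
    by blast
  have "fps_nth (e (b + y)) i \<in> J'" if "i \<ge> n0" and "y \<in> I n" for i y
  proof -
    have "fps_nth (e b) i + (fps_nth (e (b + y)) i - fps_nth (e b) i) \<in> J'"
      using n0 n k that by (intro open_ideal_add[OF J']) auto
    then show ?thesis by simp
  qed
  then show "\<exists>J n0. open_ideal I J \<and> (\<forall>i\<ge>n0. \<forall>y\<in>J. fps_nth (e (b + y)) i \<in> J')"
    using open_ideal_lin_top[OF \<open>lin_top I\<close>] by blast
qed

lemma restricted_fps_of_integrable:
  assumes "topologically_integrable I D"
  shows "restricted_fps I (Abs_fps (\<lambda>i. D i b))"
  unfolding restricted_fps_iff_eventually eventually_sequentially
proof (intro allI impI)
  fix J assume "open_ideal I J"
  then obtain J0 n0 where "open_ideal I J0" and "\<forall>n\<ge>n0. \<forall>y\<in>J0. D n (b + y) \<in> J"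
    using assms unfolding topologically_integrable_def by blast
  then show "\<exists>n0. \<forall>n\<ge>n0. fps_nth (Abs_fps (\<lambda>i. D i b)) n \<in> J"
    using open_ideal_zero by force
qed

lemma cont_map_fps_top_of_integrable:
  assumes "lin_top I"
    and add: "\<And>i x y. D i (x + y) = D i x + D i y"
    and cont: "\<And>i. cont_map I I (D i)"
    and integrable: "topologically_integrable I D"
  shows "cont_map I (fps_top I) (\<lambda>b. Abs_fps (\<lambda>i. D i b))"
  unfolding cont_map_fps_top_iff
proof (intro allI)
  fix x m
  have D_zero: "D i 0 = 0" for i
    using add[of i 0 0] by simp
  obtain J n0 where J: "open_ideal I J" and tail: "\<forall>i\<ge>n0. \<forall>y\<in>J. D i y \<in> I m"
    using integrable open_ideal_lin_top[OF \<open>lin_top I\<close>, of m]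
    unfolding topologically_integrable_def by (metis add_0)
  obtain k where "I k \<subseteq> J"
    using J unfolding open_ideal_def by auto
  then have "\<forall>\<^sub>F n in sequentially. \<forall>y\<in>I n. \<forall>i\<ge>n0. D i y \<in> I m"
    using tail by (intro eventually_lin_top[OF \<open>lin_top I\<close>]) blast
  moreover have "\<forall>\<^sub>F n in sequentially. \<forall>i\<in>{..<n0}. \<forall>y\<in>I n. D i y \<in> I m"
  proof (rule eventually_ball_finite, simp, intro ballI)
    fix i
    obtain n where "\<forall>y\<in>I n. D i (0 + y) - D i 0 \<in> I m"
      using cont[of i] unfolding cont_map_def by blast
    then show "\<forall>\<^sub>F n in sequentially. \<forall>y\<in>I n. D i y \<in> I m"
      using D_zero by (intro eventually_lin_top[OF \<open>lin_top I\<close>]) simp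
  qed
  ultimately have "\<forall>\<^sub>F n in sequentially. \<forall>y\<in>I n. \<forall>i. D i y \<in> I m"
    by eventually_elim (metis lessThan_iff not_le)
  then obtain n where "\<forall>y\<in>I n. \<forall>i. D i y \<in> I m"
    unfolding eventually_sequentially by blast
  then show "\<exists>n. \<forall>y\<in>I n. \<forall>i. fps_nth (Abs_fps (\<lambda>i. D i (x + y))) i -
      fps_nth (Abs_fps (\<lambda>i. D i x)) i \<in> I m"
    by (auto simp: add)
qed

lemma ring_hom_fun_higher_deriv:
  assumes add: "\<And>i x y. D i (x + y) = D i x + D i y"
    and D0: "D 0 = id"
    and leibniz: "\<And>i b b'. D i (b * b') = (\<Sum>j\<le>i. D j b * D (i - j) b')"
  shows "ring_hom_fun (\<lambda>b. Abs_fps (\<lambda>i. D i b))"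
proof -
  let ?e = "\<lambda>b. Abs_fps (\<lambda>i. D i b)"
  have mult: "?e (x * y) = ?e x * ?e y" for x y
    by (rule fps_ext) (simp add: leibniz fps_mult_nth atLeast0AtMost)
  have "?e 1 = 1"
    using mult[of 1 1] D0 by (intro fps_idempotent_eq_1) simp_all
  moreover have "?e (x + y) = ?e x + ?e y" for x y
    by (rule fps_ext) (simp add: add)
  ultimately show ?thesis
    unfolding ring_hom_fun_def using mult by blast
qed

lemma restricted_exp_hom_of_integrable:
  assumes "lin_top I" and D: "iterated_higher_deriv I \<phi> D"
    and integrable: "topologically_integrable I D"
  shows "restricted_exp_hom I \<phi> (\<lambda>b. Abs_fps (\<lambda>i. D i b))"
proof -
  let ?e = "\<lambda>b. Abs_fps (\<lambda>i. D i b)"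
  have add: "\<And>i x y. D i (x + y) = D i x + D i y"
    and linear: "\<And>i a x. D i (\<phi> a * x) = \<phi> a * D i x"
    and cont: "\<And>i. cont_map I I (D i)"
    and D0: "D 0 = id"
    and leibniz: "\<And>i b b'. D i (b * b') = (\<Sum>j\<le>i. D j b * D (i - j) b')"
    and comp: "\<And>i j. D i \<circ> D j = (\<lambda>b. of_nat ((i + j) choose i) * D (i + j) b)"
    using D unfolding iterated_higher_deriv_def by auto
  have hom: "ring_hom_fun ?e"
    using add D0 leibniz by (rule ring_hom_fun_higher_deriv)
  have "?e (\<phi> a) = fps_const (\<phi> a)" for a
  proof -
    have "?e (\<phi> a) = fps_const (\<phi> a) * ?e 1"
      using linear[of _ a 1] by (intro fps_ext) simp
    then show ?thesis
      using hom unfolding ring_hom_fun_def by simp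
  qed
  moreover have "D j (D i b) = of_nat ((i + j) choose i) * D (i + j) b" for i j b
    using fun_cong[OF comp[of j i], of b]
    by (simp only: comp_apply binomial_add_symmetric[of i j] add.commute[of j i])
  ultimately show ?thesis
    unfolding restricted_exp_hom_def
    using hom D0 restricted_fps_of_integrable[OF integrable]
      cont_map_fps_top_of_integrable[OF \<open>lin_top I\<close> add cont integrable]
    by simp
qed

theorem theorem2p26:
  fixes IA :: "nat \<Rightarrow> 'a::comm_ring_1 set" and IB :: "nat \<Rightarrow> 'b::comm_ring_1 set"
    and \<phi> :: "'a \<Rightarrow> 'b"
  assumes "complete_ring IA" and "complete_ring IB"
    and "ring_hom_fun \<phi>" and "cont_map IA IB \<phi>"
  shows "bij_betw (\<lambda>e i b. fps_nth (e b) i) {e. restricted_exp_hom IB \<phi> e}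
           {D. iterated_higher_deriv IB \<phi> D \<and> topologically_integrable IB D}
       \<and> (\<forall>D. iterated_higher_deriv IB \<phi> D \<and> topologically_integrable IB D \<longrightarrow>
             restricted_exp_hom IB \<phi> (\<lambda>b. Abs_fps (\<lambda>i. D i b)))"
proof -
  have "lin_top IB"
    using assms(2) unfolding complete_ring_def by simp
  then have to_exp: "\<forall>D. iterated_higher_deriv IB \<phi> D \<and> topologically_integrable IB D \<longrightarrow>
      restricted_exp_hom IB \<phi> (\<lambda>b. Abs_fps (\<lambda>i. D i b))"
    using restricted_exp_hom_of_integrable by blast
  have to_deriv: "iterated_higher_deriv IB \<phi> (\<lambda>i b. fps_nth (e b) i) \<and>
      topologically_integrable IB (\<lambda>i b. fps_nth (e b) i)" if "restricted_exp_hom IB \<phi> e" for e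
    using that iterated_higher_deriv_coeffs topologically_integrable_coeffs[OF \<open>lin_top IB\<close>]
    unfolding restricted_exp_hom_def by blast
  have "bij_betw (\<lambda>e i b. fps_nth (e b) i) {e. restricted_exp_hom IB \<phi> e}
      {D. iterated_higher_deriv IB \<phi> D \<and> topologically_integrable IB D}"
    by (rule bij_betw_byWitness[where f' = "\<lambda>D b. Abs_fps (\<lambda>i. D i b)"])
      (use to_exp to_deriv in \<open>auto simp: fps_nth_inverse\<close>)
  with to_exp show ?thesis by blast
qed

end
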